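(* Let $(A,\circ,[\cdot,\cdot],\mathcal{B})$ be a finite-dimensional quadratic dual pre-Poisson algebra and let $\phi:A\to A^*$ be the linear isomorphism $\langle\phi(x),y\rangle=\mathcal{B}(x,y)$. Let $r\in A\otimes A$ be symmetric. Then $r$ is a solution of the permutative-Leibniz Yang–Baxter equation if and only if $P_r:=\tilde r\circ\phi:A\to A$ is a Rota–Baxter operator on $(A,\circ,[\cdot,\cdot])$.
   Context: Field $\mathbb{F}$ of characteristic $0$. Dual pre-Poisson algebra: $x\circ(y\circ z)=(x\circ y)\circ z=(y\circ x)\circ z$; $[x,[y,z]]=[[x,y],z]+[y,[x,z]]$; $[x,y\circ z]=[x,y]\circ z+y\circ[x,z]$; $[x\circ y,z]=x\circ[y,z]+y\circ[x,z]$; $[x,y]\circ z=-[y,x]\circ z$. Quadratic: $\mathcal{B}$ is a nondegenerate skew-symmetric bilinear form with $\mathcal{B}(x\circ y,z)=\mathcal{B}(x,y\circ z-z\circ y)$ and $\mathcal{B}([x,y],z)=\mathcal{B}(x,[y,z]+[z,y])$. $\tilde r:A^*\to A$ is $\langle\tilde r(u^* ),v^*\rangle=\langle r,u^*\otimes v^*\rangle$. A Rota–Baxter operator is a linear $P:A\to A$ with $P(x)\circ P(y)=P(P(x)\circ y+x\circ P(y))$ and $[P(x),P(y)]=P([P(x),y]+[x,P(y)])$. PLYBE: with $x\blacksquare y=x\circ y-y\circ x$, $x\square y=[x,y]+[y,x]$, for $r=\sum_i a_i\otimes b_i$, $\mathbf{P}(r)=\sum_{i,j}\big(a_i\otimes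 a_j\otimes b_i\circ b_j-a_i\otimes b_i\circ a_j\otimes b_j+a_i\blacksquare a_j\otimes b_j\otimes b_i\big)$, $\mathbf{L}(r)=\sum_{i,j}\big(a_i\otimes a_j\otimes[b_i,b_j]+a_i\otimes[b_i,a_j]\otimes b_j-a_i\square a_j\otimes b_i\otimes b_j\big)$; $r$ is a solution if $\mathbf{P}(r)=\mathbf{L}(r)=0$; symmetric means flip-invariant. *)

theory Defs
  imports "HOL-Library.Function_Algebras"
begin

text \<open>A finite-dimensional vector space over a field 'k is modelled in coordinates as
  'n \<Rightarrow> 'k for a finite index type 'n (a chosen basis). Tensors in A\<otimes>A and A\<otimes>A\<otimes>A
  are coefficient arrays w.r.t. the product basis; the dual A* is identified with
  'n \<Rightarrow> 'k via the pairing below.\<close>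

type_synonym ('n, 'k) vec = "'n \<Rightarrow> 'k"

definition smul :: "'k::field \<Rightarrow> ('n, 'k) vec \<Rightarrow> ('n, 'k) vec" where
  "smul c x = (\<lambda>i. c * x i)"

definition basis_vec :: "'n \<Rightarrow> ('n, 'k::field) vec" where
  "basis_vec p = (\<lambda>i. if i = p then 1 else 0)"

definition bilinear_map :: "(('n, 'k::field) vec \<Rightarrow> ('n, 'k) vec \<Rightarrow> ('n, 'k) vec) \<Rightarrow> bool" where
  "bilinear_map m \<longleftrightarrow>
     (\<forall>x y z. m (x + y) z = m x z + m y z) \<and>
     (\<forall>x y z. m x (y + z) = m x y + m x z) \<and>
     (\<forall>c x y. m (smul c x) y = smul c (m x y)) \<and>
     (\<forall>c x y. m x (smul c y) = smul c (m x y))"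

definition bilinear_form :: "(('n, 'k::field) vec \<Rightarrow> ('n, 'k) vec \<Rightarrow> 'k) \<Rightarrow> bool" where
  "bilinear_form B \<longleftrightarrow>
     (\<forall>x y z. B (x + y) z = B x z + B y z) \<and>
     (\<forall>x y z. B x (y + z) = B x y + B x z) \<and>
     (\<forall>c x y. B (smul c x) y = c * B x y) \<and>
     (\<forall>c x y. B x (smul c y) = c * B x y)"

definition dual_pre_Poisson ::
  "(('n, 'k::field) vec \<Rightarrow> ('n, 'k) vec \<Rightarrow> ('n, 'k) vec) \<Rightarrow>
   (('n, 'k) vec \<Rightarrow> ('n, 'k) vec \<Rightarrow> ('n, 'k) vec) \<Rightarrow> bool" where
  "dual_pre_Poisson circ br \<longleftrightarrow>
     bilinear_map circ \<and> bilinear_map br \<and>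
     (\<forall>x y z. circ x (circ y z) = circ (circ x y) z) \<and>
     (\<forall>x y z. circ (circ x y) z = circ (circ y x) z) \<and>
     (\<forall>x y z. br x (br y z) = br (br x y) z + br y (br x z)) \<and>
     (\<forall>x y z. br x (circ y z) = circ (br x y) z + circ y (br x z)) \<and>
     (\<forall>x y z. br (circ x y) z = circ x (br y z) + circ y (br x z)) \<and>
     (\<forall>x y z. circ (br x y) z = - circ (br y x) z)"

definition quadratic_form ::
  "(('n, 'k::field) vec \<Rightarrow> ('n, 'k) vec \<Rightarrow> ('n, 'k) vec) \<Rightarrow>
   (('n, 'k) vec \<Rightarrow> ('n, 'k) vec \<Rightarrow> ('n, 'k) vec) \<Rightarrow>
   (('n, 'k) vec \<Rightarrow> ('n, 'k) vec \<Rightarrow> 'k) \<Rightarrow> bool" where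
  "quadratic_form circ br B \<longleftrightarrow>
     bilinear_form B \<and>
     (\<forall>x y. B x y = - B y x) \<and>
     (\<forall>x. (\<forall>y. B x y = 0) \<longrightarrow> x = 0) \<and>
     (\<forall>x y z. B (circ x y) z = B x (circ y z - circ z y)) \<and>
     (\<forall>x y z. B (br x y) z = B x (br y z + br z y))"

definition tensor3 :: "('n, 'k::field) vec \<Rightarrow> ('n, 'k) vec \<Rightarrow> ('n, 'k) vec \<Rightarrow> 'n \<Rightarrow> 'n \<Rightarrow> 'n \<Rightarrow> 'k" where
  "tensor3 x y z = (\<lambda>i j k. x i * y j * z k)"

text \<open>r = \<Sum>_{p,q} r p q e_p \<otimes> e_q, i.e. the decomposition a_(p,q) = r p q e_p, b_(p,q) = e_q.\<close>
definition PLYBE_P ::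
  "(('n::finite, 'k::field) vec \<Rightarrow> ('n, 'k) vec \<Rightarrow> ('n, 'k) vec) \<Rightarrow> ('n \<Rightarrow> 'n \<Rightarrow> 'k) \<Rightarrow> 'n \<Rightarrow> 'n \<Rightarrow> 'n \<Rightarrow> 'k" where
  "PLYBE_P circ r = (\<lambda>i j k. \<Sum>p\<in>UNIV. \<Sum>q\<in>UNIV. \<Sum>p'\<in>UNIV. \<Sum>q'\<in>UNIV.
      let a = smul (r p q) (basis_vec p); b = basis_vec q;
          a' = smul (r p' q') (basis_vec p'); b' = basis_vec q' in
      tensor3 a a' (circ b b') i j k
      - tensor3 a (circ b a') b' i j k
      + tensor3 (circ a a' - circ a' a) b' b i j k)"

definition PLYBE_L ::
  "(('n::finite, 'k::field) vec \<Rightarrow> ('n, 'k) vec \<Rightarrow> ('n, 'k) vec) \<Rightarrow> ('n \<Rightarrow> 'n \<Rightarrow> 'k) \<Rightarrow> 'n \<Rightarrow> 'n \<Rightarrow> 'n \<Rightarrow> 'k" where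
  "PLYBE_L br r = (\<lambda>i j k. \<Sum>p\<in>UNIV. \<Sum>q\<in>UNIV. \<Sum>p'\<in>UNIV. \<Sum>q'\<in>UNIV.
      let a = smul (r p q) (basis_vec p); b = basis_vec q;
          a' = smul (r p' q') (basis_vec p'); b' = basis_vec q' in
      tensor3 a a' (br b b') i j k
      + tensor3 a (br b a') b' i j k
      - tensor3 (br a a' + br a' a) b b' i j k)"

definition PLYBE_solution ::
  "(('n::finite, 'k::field) vec \<Rightarrow> ('n, 'k) vec \<Rightarrow> ('n, 'k) vec) \<Rightarrow>
   (('n, 'k) vec \<Rightarrow> ('n, 'k) vec \<Rightarrow> ('n, 'k) vec) \<Rightarrow> ('n \<Rightarrow> 'n \<Rightarrow> 'k) \<Rightarrow> bool" where
  "PLYBE_solution circ br r \<longleftrightarrow> PLYBE_P circ r = 0 \<and> PLYBE_L br r = 0"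

definition symmetric_tensor :: "('n \<Rightarrow> 'n \<Rightarrow> 'k) \<Rightarrow> bool" where
  "symmetric_tensor r \<longleftrightarrow> (\<forall>p q. r p q = r q p)"

definition pairing :: "('n::finite, 'k::field) vec \<Rightarrow> ('n, 'k) vec \<Rightarrow> 'k" where
  "pairing u x = (\<Sum>i\<in>UNIV. u i * x i)"

definition phi_map :: "(('n::finite, 'k::field) vec \<Rightarrow> ('n, 'k) vec \<Rightarrow> 'k) \<Rightarrow> ('n, 'k) vec \<Rightarrow> ('n, 'k) vec" where
  "phi_map B x = (\<lambda>j. B x (basis_vec j))"

text \<open>r-tilde: <r~(u), v> = <r, u \<otimes> v> = \<Sum>_{p,q} r p q u_p v_q.\<close>
definition r_tilde :: "('n::finite \<Rightarrow> 'n \<Rightarrow> 'k::field) \<Rightarrow> ('n, 'k) vec \<Rightarrow> ('n, 'k) vec" where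
  "r_tilde r u = (\<lambda>q. \<Sum>p\<in>UNIV. r p q * u p)"

definition rota_baxter ::
  "(('n, 'k::field) vec \<Rightarrow> ('n, 'k) vec \<Rightarrow> ('n, 'k) vec) \<Rightarrow>
   (('n, 'k) vec \<Rightarrow> ('n, 'k) vec \<Rightarrow> ('n, 'k) vec) \<Rightarrow> (('n, 'k) vec \<Rightarrow> ('n, 'k) vec) \<Rightarrow> bool" where
  "rota_baxter circ br P \<longleftrightarrow>
     (\<forall>x y. P (x + y) = P x + P y) \<and> (\<forall>c x. P (smul c x) = smul c (P x)) \<and>
     (\<forall>x y. circ (P x) (P y) = P (circ (P x) y + circ x (P y))) \<and>
     (\<forall>x y. br (P x) (P y) = P (br (P x) y + br x (P y)))"

end

theory Submission
  imports Defs "HOL.Vector_Spaces"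
begin

(* Since B is nondegenerate and A is finite-dimensional, \<phi> is an isomorphism, so a tensor
   T in A \<otimes> A \<otimes> A vanishes iff its pairing with \<phi> x \<otimes> \<phi> y \<otimes> \<phi> z vanishes for all x, y, z.
   For a decomposition r = \<Sum>i a_i \<otimes> b_i of the symmetric tensor r, the operator P = r\<tilde> \<circ> \<phi> is
   P x = \<Sum>i B(x, a_i) b_i = \<Sum>i B(x, b_i) a_i, and P is skew-adjoint for B. Paired in this way,
   each of the three double sums in P(r) and L(r) collapses by bilinearity to one value of B on
   products of values of P, e.g. B(z, P x \<circ> P y). The invariance of B and skew-adjointness of P
   then turn the pairing of P(r) into B(P x \<circ> P z - P(P x \<circ> z + x \<circ> P z), y), and that of L(r)
   into -B([P x, P y] - P([P x, y] + [x, P y]), z). *)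

interpretation vec: vector_space "smul :: 'k::field \<Rightarrow> ('n \<Rightarrow> 'k) \<Rightarrow> 'n \<Rightarrow> 'k"
  by unfold_locales (auto simp: smul_def algebra_simps)

lemma smul_apply [simp]: "smul c x i = c * x i"
  by (simp add: smul_def)

lemma sum_fun_apply: "(\<Sum>a\<in>A. f a) i = (\<Sum>a\<in>A. f a i)"
  by (induction A rule: infinite_finite_induct) auto

lemma sum_smul_basis_vec: "(\<Sum>j\<in>UNIV. smul (c j) (basis_vec j)) = (c :: 'n::finite \<Rightarrow> 'k::field)"
  by (rule ext) (simp add: sum_fun_apply basis_vec_def if_distrib cong: if_cong)

lemma inj_basis_vec: "inj (basis_vec :: 'n \<Rightarrow> 'n \<Rightarrow> 'k::field)"
  by (rule injI) (metis basis_vec_def one_neq_zero)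

interpretation vec: finite_dimensional_vector_space
  "smul :: 'k::field \<Rightarrow> ('n::finite \<Rightarrow> 'k) \<Rightarrow> 'n \<Rightarrow> 'k" "range basis_vec"
proof unfold_locales
  show "vec.independent (range (basis_vec :: 'n \<Rightarrow> 'n \<Rightarrow> 'k))"
  proof (rule ccontr)
    assume "\<not> vec.independent (range (basis_vec :: 'n \<Rightarrow> 'n \<Rightarrow> 'k))"
    then obtain u j where "u (basis_vec j) \<noteq> 0"
      and "(\<Sum>w\<in>range basis_vec. smul (u w) w) = (0 :: 'n \<Rightarrow> 'k)"
      by (auto simp: vec.dependent_finite)
    moreover have "(\<Sum>w\<in>range basis_vec. smul (u w) w) = (\<lambda>i. u (basis_vec i))"
      by (simp add: sum.reindex inj_basis_vec sum_smul_basis_vec)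
    ultimately show False
      by (metis zero_fun_apply)
  qed
  show "vec.span (range (basis_vec :: 'n \<Rightarrow> 'n \<Rightarrow> 'k)) = UNIV"
    using sum_smul_basis_vec
    by (metis (no_types, lifting) UNIV_eq_I rangeI vec.span_base vec.span_scale vec.span_sum)
qed simp

lemma bilinear_formD:
  assumes "bilinear_form B"
  shows "B (x + y) z = B x z + B y z" "B x (y + z) = B x y + B x z"
    and "B (smul c x) y = c * B x y" "B x (smul c y) = c * B x y"
  using assms by (simp_all add: bilinear_form_def)

lemma bilinear_form_zero:
  assumes "bilinear_form B"
  shows "B 0 y = 0" "B x 0 = 0"
  using bilinear_formD(1)[OF assms, of 0 0 y] bilinear_formD(2)[OF assms, of x 0 0]
  by (metis add.right_neutral add_left_cancel)+

lemma bilinear_form_diff: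
  assumes "bilinear_form B"
  shows "B (x - y) z = B x z - B y z" "B x (y - z) = B x y - B x z"
  using bilinear_formD(1,2)[OF assms] by (metis eq_diff_eq diff_add_cancel)+

lemma bilinear_form_sum:
  assumes "bilinear_form B"
  shows "B (\<Sum>i\<in>I. f i) y = (\<Sum>i\<in>I. B (f i) y)" "B x (\<Sum>i\<in>I. f i) = (\<Sum>i\<in>I. B x (f i))"
  by (induction I rule: infinite_finite_induct)
    (simp_all add: bilinear_form_zero[OF assms] bilinear_formD[OF assms])

lemma bilinear_form_sum_smul:
  assumes "bilinear_form B"
  shows "B (\<Sum>i\<in>I. smul (s i) (u i)) (\<Sum>j\<in>J. smul (t j) (v j)) =
    (\<Sum>i\<in>I. \<Sum>j\<in>J. s i * t j * B (u i) (v j))"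
proof -
  have "B (\<Sum>i\<in>I. smul (s i) (u i)) (\<Sum>j\<in>J. smul (t j) (v j)) =
      (\<Sum>i\<in>I. s i * B (u i) (\<Sum>j\<in>J. smul (t j) (v j)))"
    by (simp add: bilinear_form_sum(1)[OF assms] bilinear_formD(3)[OF assms])
  also have "\<dots> = (\<Sum>i\<in>I. \<Sum>j\<in>J. s i * t j * B (u i) (v j))"
    by (simp add: bilinear_form_sum(2)[OF assms] bilinear_formD(4)[OF assms] sum_distrib_left mult.assoc)
  finally show ?thesis .
qed

lemma bilinear_form_compose:
  assumes "bilinear_form B" and "bilinear_map m"
  shows "bilinear_form (\<lambda>x y. B z (m x y))"
  using assms by (simp add: bilinear_form_def bilinear_map_def)

lemma bilinear_map_flip_add:
  assumes "bilinear_map m"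
  shows "bilinear_map (\<lambda>x y. m x y + m y x)"
  using assms by (simp add: bilinear_map_def vec.scale_right_distrib algebra_simps)

lemma bilinear_map_flip_diff:
  assumes "bilinear_map m"
  shows "bilinear_map (\<lambda>x y. m x y - m y x)"
  using assms by (simp add: bilinear_map_def vec.scale_right_diff_distrib algebra_simps)

lemma pairing_phi_map:
  assumes "bilinear_form B"
  shows "pairing (phi_map B x) y = B x y"
proof -
  have "B x y = B x (\<Sum>j\<in>UNIV. smul (y j) (basis_vec j))"
    by (simp add: sum_smul_basis_vec)
  also have "\<dots> = pairing (phi_map B x) y"
    by (simp add: bilinear_form_sum[OF assms] bilinear_formD[OF assms] pairing_def phi_map_def mult.commute)
  finally show ?thesis ..
qed

lemma surj_phi_map:
  assumes "bilinear_form B" and nondegenerate: "\<And>x. (\<And>y. B x y = 0) \<Longrightarrow> x = 0"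
  shows "surj (phi_map (B :: ('n::finite \<Rightarrow> 'k::field) \<Rightarrow> _))"
proof (rule vec.linear_inj_imp_surj)
  show "Vector_Spaces.linear smul smul (phi_map B)"
    by unfold_locales (simp_all add: fun_eq_iff phi_map_def bilinear_formD[OF assms(1)])
  show "inj (phi_map B)"
  proof (rule injI)
    fix x y assume "phi_map B x = phi_map B y"
    then have "B (x - y) z = 0" for z
      by (metis assms(1) bilinear_form_diff(1) pairing_phi_map right_minus_eq)
    then show "x = y" using nondegenerate[of "x - y"] by simp
  qed
qed

definition pairing3 ::
  "('n::finite \<Rightarrow> 'n \<Rightarrow> 'n \<Rightarrow> 'k::field) \<Rightarrow> ('n, 'k) vec \<Rightarrow> ('n, 'k) vec \<Rightarrow> ('n, 'k) vec \<Rightarrow> 'k" where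
  "pairing3 T u v w = (\<Sum>i\<in>UNIV. \<Sum>j\<in>UNIV. \<Sum>k\<in>UNIV. T i j k * u i * v j * w k)"

lemma pairing3_add: "pairing3 (S + T) u v w = pairing3 S u v w + pairing3 T u v w"
  by (simp add: pairing3_def algebra_simps sum.distrib)

lemma pairing3_diff: "pairing3 (S - T) u v w = pairing3 S u v w - pairing3 T u v w"
  by (simp add: pairing3_def algebra_simps sum_subtractf)

lemma pairing3_sum: "pairing3 (\<Sum>a\<in>A. T a) u v w = (\<Sum>a\<in>A. pairing3 (T a) u v w)"
proof (induction A rule: infinite_finite_induct)
  case (insert a A)
  then show ?case by (metis pairing3_add sum.insert)
qed (simp_all add: pairing3_def)

lemma pairing3_tensor3: "pairing3 (tensor3 a b c) u v w = pairing u a * pairing v b * pairing w c"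
  unfolding pairing3_def tensor3_def pairing_def
  by (simp add: sum_distrib_left sum_distrib_right mult_ac) (rule sum.swap)

lemma pairing3_basis_vec: "pairing3 T (basis_vec i) (basis_vec j) (basis_vec k) = T i j k"
  by (simp add: pairing3_def basis_vec_def if_distrib[of "\<lambda>c. _ * c"] cong: if_cong)

lemma tensor_eq_0_iff_pairing3:
  assumes "surj f"
  shows "T = 0 \<longleftrightarrow> (\<forall>x y z. pairing3 T (f x) (f y) (f z) = 0)"
proof
  assume "\<forall>x y z. pairing3 T (f x) (f y) (f z) = 0"
  with assms have "pairing3 T u v w = 0" for u v w
    by (metis surjD)
  then show "T = 0"
    by (intro ext) (metis pairing3_basis_vec zero_fun_apply)
qed (simp add: pairing3_def)

definition PLYBE_P_dec ::
  "'i set \<Rightarrow> (('n, 'k::field) vec \<Rightarrow> ('n, 'k) vec \<Rightarrow> ('n, 'k) vec)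
    \<Rightarrow> ('i \<Rightarrow> ('n, 'k) vec) \<Rightarrow> ('i \<Rightarrow> ('n, 'k) vec) \<Rightarrow> 'n \<Rightarrow> 'n \<Rightarrow> 'n \<Rightarrow> 'k" where
  "PLYBE_P_dec I circ a b = (\<Sum>i\<in>I. \<Sum>j\<in>I.
      tensor3 (a i) (a j) (circ (b i) (b j))
    - tensor3 (a i) (circ (b i) (a j)) (b j)
    + tensor3 (circ (a i) (a j) - circ (a j) (a i)) (b j) (b i))"

definition PLYBE_L_dec ::
  "'i set \<Rightarrow> (('n, 'k::field) vec \<Rightarrow> ('n, 'k) vec \<Rightarrow> ('n, 'k) vec)
    \<Rightarrow> ('i \<Rightarrow> ('n, 'k) vec) \<Rightarrow> ('i \<Rightarrow> ('n, 'k) vec) \<Rightarrow> 'n \<Rightarrow> 'n \<Rightarrow> 'n \<Rightarrow> 'k" where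
  "PLYBE_L_dec I br a b = (\<Sum>i\<in>I. \<Sum>j\<in>I.
      tensor3 (a i) (a j) (br (b i) (b j))
    + tensor3 (a i) (br (b i) (a j)) (b j)
    - tensor3 (br (a i) (a j) + br (a j) (a i)) (b i) (b j))"

definition left_factor :: "('n \<Rightarrow> 'n \<Rightarrow> 'k::field) \<Rightarrow> 'n \<times> 'n \<Rightarrow> ('n, 'k) vec" where
  "left_factor r = (\<lambda>(p, q). smul (r p q) (basis_vec p))"

definition right_factor :: "'n \<times> 'n \<Rightarrow> ('n, 'k::field) vec" where
  "right_factor = (\<lambda>(p, q). basis_vec q)"

lemma sum_UNIV_pair: "(\<Sum>u\<in>UNIV. f u) = (\<Sum>p\<in>UNIV. \<Sum>q\<in>UNIV. f (p, q))"
  by (simp add: sum.cartesian_product flip: UNIV_Times_UNIV)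

lemma sum_UNIV_pair_swap: "(\<Sum>u\<in>UNIV. f u) = (\<Sum>q\<in>UNIV. \<Sum>p\<in>UNIV. f (p, q))"
  by (simp add: sum_UNIV_pair) (rule sum.swap)

lemma PLYBE_P_eq_dec: "PLYBE_P circ r = PLYBE_P_dec UNIV circ (left_factor r) right_factor"
  unfolding PLYBE_P_def PLYBE_P_dec_def
  by (intro ext) (simp add: sum_fun_apply sum_UNIV_pair left_factor_def right_factor_def Let_def)

lemma PLYBE_L_eq_dec: "PLYBE_L br r = PLYBE_L_dec UNIV br (left_factor r) right_factor"
  unfolding PLYBE_L_def PLYBE_L_dec_def
  by (intro ext) (simp add: sum_fun_apply sum_UNIV_pair left_factor_def right_factor_def Let_def)

definition rb_defect ::
  "(('n, 'k::field) vec \<Rightarrow> ('n, 'k) vec \<Rightarrow> ('n, 'k) vec) \<Rightarrow> (('n, 'k) vec \<Rightarrow> ('n, 'k) vec)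
    \<Rightarrow> ('n, 'k) vec \<Rightarrow> ('n, 'k) vec \<Rightarrow> ('n, 'k) vec" where
  "rb_defect m P x y = m (P x) (P y) - P (m (P x) y + m x (P y))"

(* (I, a, b) stands for a decomposition r = \<Sum>i\<in>I. a i \<otimes> b i and P for r\<tilde> \<circ> \<phi>; that P can be
   expanded along either tensor factor is where the symmetry of r enters. *)
locale symmetric_tensor_operator =
  fixes B :: "('n::finite, 'k::field) vec \<Rightarrow> ('n, 'k) vec \<Rightarrow> 'k"
    and I :: "'i set" and a b :: "'i \<Rightarrow> ('n, 'k) vec"
    and P :: "('n, 'k) vec \<Rightarrow> ('n, 'k) vec"
  assumes bilinear: "bilinear_form B"
    and skew: "B x y = - B y x"
    and P_eq_left: "P x = (\<Sum>i\<in>I. smul (B x (a i)) (b i))"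
    and P_eq_right: "P x = (\<Sum>i\<in>I. smul (B x (b i)) (a i))"
begin

lemma P_add: "P (x + y) = P x + P y"
  by (simp add: P_eq_left[of "x + y"] P_eq_left[of x] P_eq_left[of y]
      bilinear_formD[OF bilinear] vec.scale_left_distrib sum.distrib)

lemma P_smul: "P (smul c x) = smul c (P x)"
  by (simp add: P_eq_left[of "smul c x"] P_eq_left[of x] bilinear_formD[OF bilinear] vec.scale_sum_right)

lemma P_skew_adjoint: "B (P x) y = - B x (P y)"
proof -
  have "B (P x) y = (\<Sum>i\<in>I. B x (a i) * B (b i) y)"
    by (simp add: P_eq_left[of x] bilinear_form_sum[OF bilinear] bilinear_formD[OF bilinear])
  also have "\<dots> = - (\<Sum>i\<in>I. B y (b i) * B x (a i))"
    by (simp add: skew[of "b _" y] sum_negf mult.commute)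
  also have "\<dots> = - B x (P y)"
    by (simp add: P_eq_right[of y] bilinear_form_sum[OF bilinear] bilinear_formD[OF bilinear])
  finally show ?thesis .
qed

lemma pairing3_PLYBE_P_dec:
  assumes "bilinear_map circ"
  shows "pairing3 (PLYBE_P_dec I circ a b) (phi_map B x) (phi_map B y) (phi_map B z) =
    B z (circ (P x) (P y)) - B y (circ (P x) (P z)) + B x (circ (P z) (P y) - circ (P y) (P z))"
proof -
  have "pairing3 (PLYBE_P_dec I circ a b) (phi_map B x) (phi_map B y) (phi_map B z) =
      (\<Sum>i\<in>I. \<Sum>j\<in>I. B x (a i) * B y (a j) * B z (circ (b i) (b j)))
    - (\<Sum>i\<in>I. \<Sum>j\<in>I. B x (a i) * B z (b j) * B y (circ (b i) (a j)))
    + (\<Sum>i\<in>I. \<Sum>j\<in>I. B z (b i) * B y (b j) * B x (circ (a i) (a j) - circ (a j) (a i)))"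
    by (simp add: PLYBE_P_dec_def pairing3_sum pairing3_add pairing3_diff pairing3_tensor3
        pairing_phi_map[OF bilinear] sum.distrib sum_subtractf mult_ac)
  also have "\<dots> = B z (circ (P x) (P y)) - B y (circ (P x) (P z)) + B x (circ (P z) (P y) - circ (P y) (P z))"
    by (simp only: bilinear_form_sum_smul[OF bilinear_form_compose[OF bilinear assms], symmetric]
        bilinear_form_sum_smul[OF bilinear_form_compose[OF bilinear bilinear_map_flip_diff[OF assms]], symmetric]
        P_eq_left[symmetric] P_eq_right[symmetric])
  finally show ?thesis .
qed

lemma pairing3_PLYBE_L_dec:
  assumes "bilinear_map br"
  shows "pairing3 (PLYBE_L_dec I br a b) (phi_map B x) (phi_map B y) (phi_map B z) =
    B z (br (P x) (P y)) + B y (br (P x) (P z)) - B x (br (P y) (P z) + br (P z) (P y))"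
proof -
  have "pairing3 (PLYBE_L_dec I br a b) (phi_map B x) (phi_map B y) (phi_map B z) =
      (\<Sum>i\<in>I. \<Sum>j\<in>I. B x (a i) * B y (a j) * B z (br (b i) (b j)))
    + (\<Sum>i\<in>I. \<Sum>j\<in>I. B x (a i) * B z (b j) * B y (br (b i) (a j)))
    - (\<Sum>i\<in>I. \<Sum>j\<in>I. B y (b i) * B z (b j) * B x (br (a i) (a j) + br (a j) (a i)))"
    by (simp add: PLYBE_L_dec_def pairing3_sum pairing3_add pairing3_diff pairing3_tensor3
        pairing_phi_map[OF bilinear] sum.distrib sum_subtractf mult_ac)
  also have "\<dots> = B z (br (P x) (P y)) + B y (br (P x) (P z)) - B x (br (P y) (P z) + br (P z) (P y))"
    by (simp only: bilinear_form_sum_smul[OF bilinear_form_compose[OF bilinear assms], symmetric]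
        bilinear_form_sum_smul[OF bilinear_form_compose[OF bilinear bilinear_map_flip_add[OF assms]], symmetric]
        P_eq_left[symmetric] P_eq_right[symmetric])
  finally show ?thesis .
qed

lemma pairing3_PLYBE_P_dec_rb_defect:
  assumes "bilinear_map circ" and invariant: "\<And>x y z. B (circ x y) z = B x (circ y z - circ z y)"
  shows "pairing3 (PLYBE_P_dec I circ a b) (phi_map B x) (phi_map B y) (phi_map B z) =
    B (rb_defect circ P x z) y"
proof -
  have circ_swap: "B (circ u w) v = - B (circ u v) w" for u v w
    using invariant[of u w v] invariant[of u v w] by (simp add: bilinear_form_diff[OF bilinear])
  have "B z (circ (P x) (P y)) = - B (P (circ (P x) z)) y"
    by (simp add: skew[of z] circ_swap[of "P x" z] P_skew_adjoint[of "circ (P x) z"])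
  moreover have "B y (circ (P x) (P z)) = - B (circ (P x) (P z)) y"
    by (rule skew)
  moreover have "B x (circ (P z) (P y) - circ (P y) (P z)) = - B (P (circ x (P z))) y"
    by (simp add: invariant[symmetric] P_skew_adjoint)
  ultimately show ?thesis
    by (simp add: pairing3_PLYBE_P_dec[OF assms(1)] rb_defect_def P_add
        bilinear_form_diff[OF bilinear] bilinear_formD[OF bilinear])
qed

lemma pairing3_PLYBE_L_dec_rb_defect:
  assumes "bilinear_map br" and invariant: "\<And>x y z. B (br x y) z = B x (br y z + br z y)"
  shows "pairing3 (PLYBE_L_dec I br a b) (phi_map B x) (phi_map B y) (phi_map B z) =
    - B (rb_defect br P x y) z"
proof -
  have br_swap: "B (br u w) v = B (br u v) w" for u v w
    by (simp add: invariant add.commute)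
  have "B z (br (P x) (P y)) = - B (br (P x) (P y)) z"
    by (rule skew)
  moreover have "B y (br (P x) (P z)) = B (P (br (P x) y)) z"
    by (simp add: skew[of y] br_swap[of "P x" "P z"] P_skew_adjoint[of "br (P x) y"])
  moreover have "B x (br (P y) (P z) + br (P z) (P y)) = - B (P (br x (P y))) z"
    by (simp add: invariant[symmetric] P_skew_adjoint)
  ultimately show ?thesis
    by (simp add: pairing3_PLYBE_L_dec[OF assms(1)] rb_defect_def P_add
        bilinear_form_diff[OF bilinear] bilinear_formD[OF bilinear])
qed

lemma PLYBE_P_dec_eq_0_iff:
  assumes "bilinear_map circ" and "\<And>x y z. B (circ x y) z = B x (circ y z - circ z y)"
    and nondegenerate: "\<And>x. (\<And>y. B x y = 0) \<Longrightarrow> x = 0"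
  shows "PLYBE_P_dec I circ a b = 0 \<longleftrightarrow> (\<forall>x y. rb_defect circ P x y = 0)"
proof -
  have "PLYBE_P_dec I circ a b = 0 \<longleftrightarrow> (\<forall>x y z. B (rb_defect circ P x z) y = 0)"
    by (simp add: tensor_eq_0_iff_pairing3[OF surj_phi_map[OF bilinear nondegenerate]]
        pairing3_PLYBE_P_dec_rb_defect[OF assms(1,2)])
  also have "\<dots> \<longleftrightarrow> (\<forall>x z. rb_defect circ P x z = 0)"
    using nondegenerate bilinear_form_zero(1)[OF bilinear] by auto
  finally show ?thesis .
qed

lemma PLYBE_L_dec_eq_0_iff:
  assumes "bilinear_map br" and "\<And>x y z. B (br x y) z = B x (br y z + br z y)"
    and nondegenerate: "\<And>x. (\<And>y. B x y = 0) \<Longrightarrow> x = 0"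
  shows "PLYBE_L_dec I br a b = 0 \<longleftrightarrow> (\<forall>x y. rb_defect br P x y = 0)"
proof -
  have "PLYBE_L_dec I br a b = 0 \<longleftrightarrow> (\<forall>x y z. B (rb_defect br P x y) z = 0)"
    by (simp add: tensor_eq_0_iff_pairing3[OF surj_phi_map[OF bilinear nondegenerate]]
        pairing3_PLYBE_L_dec_rb_defect[OF assms(1,2)])
  also have "\<dots> \<longleftrightarrow> (\<forall>x y. rb_defect br P x y = 0)"
    using nondegenerate bilinear_form_zero(1)[OF bilinear] by auto
  finally show ?thesis .
qed

end

lemma symmetric_tensor_operator_r_tilde:
  assumes "bilinear_form B" and "\<And>x y. B x y = - B y x" and "symmetric_tensor r"
  shows "symmetric_tensor_operator B UNIV (left_factor r) right_factor (r_tilde r \<circ> phi_map B)"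
proof unfold_locales
  show "(r_tilde r \<circ> phi_map B) x = (\<Sum>u\<in>UNIV. smul (B x (left_factor r u)) (right_factor u))" for x
    by (rule ext) (simp add: r_tilde_def phi_map_def left_factor_def right_factor_def sum_fun_apply
        sum_UNIV_pair bilinear_formD[OF assms(1)] basis_vec_def if_distrib cong: if_cong)
  show "(r_tilde r \<circ> phi_map B) x = (\<Sum>u\<in>UNIV. smul (B x (right_factor u)) (left_factor r u))" for x
    using assms(3) unfolding symmetric_tensor_def
    by (intro ext) (simp add: r_tilde_def phi_map_def left_factor_def right_factor_def sum_fun_apply
        sum_UNIV_pair_swap basis_vec_def if_distrib mult.commute cong: if_cong)
qed (fact assms(1), rule assms(2))

theorem proposition3p24:
  fixes circ br :: "('n::finite \<Rightarrow> 'k::field_char_0) \<Rightarrow> ('n \<Rightarrow> 'k) \<Rightarrow> ('n \<Rightarrow> 'k)"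
    and B :: "('n \<Rightarrow> 'k) \<Rightarrow> ('n \<Rightarrow> 'k) \<Rightarrow> 'k"
    and r :: "'n \<Rightarrow> 'n \<Rightarrow> 'k"
  assumes "dual_pre_Poisson circ br"
    and "quadratic_form circ br B"
    and "symmetric_tensor r"
  shows "PLYBE_solution circ br r \<longleftrightarrow> rota_baxter circ br (r_tilde r \<circ> phi_map B)"
proof -
  have maps_bilinear: "bilinear_map circ" "bilinear_map br"
    using assms(1) by (simp_all add: dual_pre_Poisson_def)
  have B: "bilinear_form B" "\<And>x y. B x y = - B y x" "\<And>x. (\<And>y. B x y = 0) \<Longrightarrow> x = 0"
    and invariant: "\<And>x y z. B (circ x y) z = B x (circ y z - circ z y)"
      "\<And>x y z. B (br x y) z = B x (br y z + br z y)"
    using assms(2) unfolding quadratic_form_def by blast+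
  define P where "P = r_tilde r \<circ> phi_map B"
  interpret symmetric_tensor_operator B UNIV "left_factor r" right_factor P
    unfolding P_def by (rule symmetric_tensor_operator_r_tilde[OF B(1,2) assms(3)])
  have "PLYBE_P circ r = 0 \<longleftrightarrow> (\<forall>x y. rb_defect circ P x y = 0)"
    using PLYBE_P_dec_eq_0_iff[OF maps_bilinear(1) invariant(1) B(3)] by (simp add: PLYBE_P_eq_dec)
  moreover have "PLYBE_L br r = 0 \<longleftrightarrow> (\<forall>x y. rb_defect br P x y = 0)"
    using PLYBE_L_dec_eq_0_iff[OF maps_bilinear(2) invariant(2) B(3)] by (simp add: PLYBE_L_eq_dec)
  ultimately show ?thesis
    unfolding P_def[symmetric] PLYBE_solution_def rota_baxter_def rb_defect_def
    by (simp add: P_add P_smul)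
qed

end
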